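(* For all $n\geq 1$, \[\bar{a}_2(n)=2\bar{p}(n)-\bar{p}(n+1)+\bar{u}(n+1),\] where $\bar{u}(N)$ is the number of overpartitions of $N$ such that: (1) $1$ is not a part; (2) the smallest part is overlined and no other part has the same value; (3) the values of the largest and second largest parts are either equal, or consecutive with the second largest part overlined.
   Context: An overpartition of $n$ is a partition of $n$ in which the first occurrence of each distinct part value may be overlined. $\bar{p}(n)$ is the number of overpartitions of $n$. $\bar{a}_m(n)$ is the number of overpartitions of $n$ in which the smallest part value occurs at least $m$ times, where an overlined part and a non-overlined part of the same value are counted as equal (e.g. $\bar{1}+1$ has smallest part $1$ occurring twice). *)

theory Defs
  imports Main "HOL-Library.Multiset"
begin

text \<open>An overpartition is represented as a pair (M, Ov): M is the multiset of part
  values (all positive), Ov is the set of values whose first occurrence is overlined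
  (so Ov must be a subset of the part values).\<close>

definition overpartitions :: "nat \<Rightarrow> (nat multiset \<times> nat set) set" where
  "overpartitions n = {(M, Ov). (\<forall>x\<in>#M. 0 < x) \<and> sum_mset M = n \<and> Ov \<subseteq> set_mset M}"

definition pbar :: "nat \<Rightarrow> nat" where
  "pbar n = card (overpartitions n)"

definition plain_count :: "nat multiset \<times> nat set \<Rightarrow> nat \<Rightarrow> nat" where
  "plain_count P v = count (fst P) v - (if v \<in> snd P then 1 else 0)"

definition abar :: "nat \<Rightarrow> nat \<Rightarrow> nat" where
  "abar m n = card {(M, Ov) \<in> overpartitions n.
      M \<noteq> {#} \<and> m \<le> count M (Min (set_mset M))}"

definition ubar_cond :: "nat multiset \<times> nat set \<Rightarrow> bool" where
  "ubar_cond P = (let M = fst P; Ov = snd P; s = Min (set_mset M); L = Max (set_mset M);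
                      R = M - {#L#} in
     plain_count P 1 = 0 \<and>
     M \<noteq> {#} \<and> s \<in> Ov \<and> count M s = 1 \<and>
     R \<noteq> {#} \<and>
     (Max (set_mset R) = L \<or> (Max (set_mset R) + 1 = L \<and> Max (set_mset R) \<in> Ov)))"

definition ubar :: "nat \<Rightarrow> nat" where
  "ubar N = card {P \<in> overpartitions N. ubar_cond P}"

end

theory Submission
  imports Defs
begin

(* Removing a non-overlined 1 maps the overpartitions of n+1 that contain one bijectively onto
   the overpartitions of n, so pbar (n+1) is pbar n plus the number of overpartitions of n+1
   without a non-overlined 1.  Among the latter, those whose smallest part does not occur exactly
   once with an overline have no part 1 at all; lowering their smallest part by one matches them
   with the overpartitions of n whose smallest part occurs once without overline.  Those whose
   smallest part does occur once with an overline either satisfy condition (3), and are counted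
   by ubar (n+1), or their largest part occurs once and the value below it is not overlined;
   lowering the largest part by one, carrying its overline along, matches the latter with the
   overpartitions of n whose smallest part occurs once with an overline.  Since the overpartitions
   of n split into those counted by abar 2 n and those whose smallest part occurs exactly once,
   overlined or not, the identity follows. *)

lemma card_filter_split:
  assumes "finite A"
  shows "card {x \<in> A. P x} + card {x \<in> A. \<not> P x} = card A"
proof -
  have "card ({x \<in> A. P x} \<union> {x \<in> A. \<not> P x}) = card {x \<in> A. P x} + card {x \<in> A. \<not> P x}"
    using assms by (intro card_Un_disjoint) auto
  moreover have "{x \<in> A. P x} \<union> {x \<in> A. \<not> P x} = A" by blast
  ultimately show ?thesis by simp
qed

lemma in_diff_single_iff: "y \<in># M - {#x#} \<longleftrightarrow> y \<in># M \<and> (y \<noteq> x \<or> 2 \<le> count M x)"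
  by (auto simp: in_diff_count simp flip: count_greater_zero_iff)

lemma sum_mset_replace:
  fixes M :: "'a::comm_monoid_add multiset"
  assumes "x \<in># M"
  shows "sum_mset (add_mset y (M - {#x#})) + x = sum_mset M + y"
proof -
  obtain N where "M = add_mset x N" using multi_member_split[OF assms] ..
  then show ?thesis by (simp add: ac_simps)
qed

lemma size_le_sum_mset:
  fixes M :: "nat multiset"
  assumes "\<forall>x\<in>#M. 0 < x"
  shows "size M \<le> sum_mset M"
  using assms by (induction M) auto

lemma member_le_sum_mset:
  fixes M :: "nat multiset"
  assumes "x \<in># M"
  shows "x \<le> sum_mset M"
proof -
  obtain N where "M = add_mset x N" using multi_member_split[OF assms] ..
  then show ?thesis by simp
qed

lemma Min_mset_raise:
  fixes M :: "nat multiset"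
  assumes "count M (Min_mset M) = 1"
  shows "Min_mset (add_mset (Min_mset M + 1) (M - {#Min_mset M#})) = Min_mset M + 1"
proof -
  have lb: "Min_mset M + 1 \<le> y" if "y \<in># M - {#Min_mset M#}" for y
  proof -
    have "y \<in># M" "y \<noteq> Min_mset M" using that assms by (auto simp: in_diff_single_iff)
    then show ?thesis by (simp add: Suc_le_eq le_neq_implies_less)
  qed
  show ?thesis using Min_insert2[OF finite_set_mset lb] by simp
qed

lemma Min_mset_lower:
  fixes M :: "nat multiset"
  shows "Min_mset (add_mset (Min_mset M - 1) (M - {#Min_mset M#})) = Min_mset M - 1"
proof -
  have lb: "Min_mset M - 1 \<le> y" if "y \<in># M - {#Min_mset M#}" for y
  proof -
    have "Min_mset M \<le> y" using in_diffD[OF that] by simp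
    then show ?thesis by simp
  qed
  show ?thesis using Min_insert2[OF finite_set_mset lb] by simp
qed

lemma Max_mset_raise:
  fixes M :: "nat multiset"
  shows "Max_mset (add_mset (Max_mset M + 1) (M - {#Max_mset M#})) = Max_mset M + 1"
proof -
  have ub: "y \<le> Max_mset M + 1" if "y \<in># M - {#Max_mset M#}" for y
  proof -
    have "y \<le> Max_mset M" using in_diffD[OF that] by simp
    then show ?thesis by simp
  qed
  show ?thesis using Max_insert2[OF finite_set_mset ub] by simp
qed

lemma Max_mset_lower:
  fixes M :: "nat multiset"
  assumes "count M (Max_mset M) = 1"
  shows "Max_mset (add_mset (Max_mset M - 1) (M - {#Max_mset M#})) = Max_mset M - 1"
proof -
  have ub: "y \<le> Max_mset M - 1" if "y \<in># M - {#Max_mset M#}" for y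
  proof -
    have "y \<in># M" "y \<noteq> Max_mset M" using that assms by (auto simp: in_diff_single_iff)
    then have "y < Max_mset M" by (simp add: le_neq_implies_less)
    then show ?thesis by simp
  qed
  show ?thesis using Max_insert2[OF finite_set_mset ub] by simp
qed

lemma Min_mset_replace_other:
  fixes M :: "'a::linorder multiset"
  assumes "count M (Min_mset M) = 1" "x \<in># M" "x \<noteq> Min_mset M" "Min_mset M < w"
  shows "Min_mset (add_mset w (M - {#x#})) = Min_mset M"
    and "count (add_mset w (M - {#x#})) (Min_mset M) = 1"
proof -
  have mem: "Min_mset M \<in># M - {#x#}"
    using assms by (auto simp: in_diff_single_iff simp flip: count_greater_zero_iff)
  have "Min_mset (M - {#x#}) = Min_mset M"
    using mem by (intro Min_eqI) (auto dest: in_diffD)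
  moreover have "M - {#x#} \<noteq> {#}" using mem by auto
  ultimately show "Min_mset (add_mset w (M - {#x#})) = Min_mset M"
    using assms(4) by (simp add: Min_insert)
  show "count (add_mset w (M - {#x#})) (Min_mset M) = 1"
    using assms by auto
qed

lemma mset_eq_single_if_Min_eq_Max:
  fixes M :: "'a::linorder multiset"
  assumes "count M (Min_mset M) = 1" "Max_mset M = Min_mset M"
  shows "M = {#Min_mset M#}"
proof (rule multiset_eqI)
  fix y
  show "count M y = count {#Min_mset M#} y"
  proof (cases "y \<in># M")
    case True
    then have "y = Min_mset M"
      using assms(2) by (metis Max_ge Min_le antisym finite_set_mset)
    then show ?thesis using assms(1) by simp
  next
    case False
    then show ?thesis using assms(1) by (auto simp: not_in_iff)
  qed
qed

lemma finite_overpartitions: "finite (overpartitions n)"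
proof -
  have "overpartitions n \<subseteq> mset ` {xs. set xs \<subseteq> {..n} \<and> length xs \<le> n} \<times> Pow {..n}"
  proof
    fix P assume "P \<in> overpartitions n"
    then obtain M Ov where P: "P = (M, Ov)" "\<forall>x\<in>#M. 0 < x" "sum_mset M = n" "Ov \<subseteq> set_mset M"
      unfolding overpartitions_def by auto
    obtain xs where xs: "mset xs = M" using ex_mset ..
    have "size M \<le> n" "set_mset M \<subseteq> {..n}"
      using P size_le_sum_mset member_le_sum_mset by auto
    then show "P \<in> mset ` {xs. set xs \<subseteq> {..n} \<and> length xs \<le> n} \<times> Pow {..n}"
      using P xs by auto
  qed
  then show ?thesis by (rule finite_subset) (auto intro: finite_lists_length_le)
qed

lemma overpartition_nonempty:
  assumes "(M, Ov) \<in> overpartitions n" "0 < n"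
  shows "M \<noteq> {#}"
  using assms by (auto simp: overpartitions_def)

lemma overpartition_part_pos: "(M, Ov) \<in> overpartitions n \<Longrightarrow> x \<in># M \<Longrightarrow> 0 < x"
  by (auto simp: overpartitions_def)

lemma replace_part_in_overpartitions:
  assumes "(M, Ov) \<in> overpartitions n" "x \<in># M" "0 < y" "n + y = m + x"
    and "Ov' \<subseteq> set_mset (add_mset y (M - {#x#}))"
  shows "(add_mset y (M - {#x#}), Ov') \<in> overpartitions m"
  using assms sum_mset_replace[OF assms(2), of y]
  by (auto simp: overpartitions_def dest: in_diffD)

lemma plain_count_eq_0_iff: "plain_count (M, Ov) v = 0 \<longleftrightarrow> v \<notin># M \<or> (count M v = 1 \<and> v \<in> Ov)"
  by (auto simp: plain_count_def not_in_iff)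

definition single_overlined_min :: "nat \<Rightarrow> (nat multiset \<times> nat set) set" where
  "single_overlined_min n = {(M, Ov) \<in> overpartitions n.
     M \<noteq> {#} \<and> count M (Min_mset M) = 1 \<and> Min_mset M \<in> Ov}"

definition single_plain_min :: "nat \<Rightarrow> (nat multiset \<times> nat set) set" where
  "single_plain_min n = {(M, Ov) \<in> overpartitions n.
     M \<noteq> {#} \<and> count M (Min_mset M) = 1 \<and> Min_mset M \<notin> Ov}"

definition no_plain_one :: "nat \<Rightarrow> (nat multiset \<times> nat set) set" where
  "no_plain_one n = {P \<in> overpartitions n. plain_count P 1 = 0}"

lemma pbar_split_min:
  assumes "0 < n"
  shows "pbar n = abar 2 n + card (single_overlined_min n) + card (single_plain_min n)"
proof -
  define A2 where "A2 = {(M, Ov) \<in> overpartitions n. M \<noteq> {#} \<and> 2 \<le> count M (Min_mset M)}"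
  have "count M (Min_mset M) = 1 \<or> 2 \<le> count M (Min_mset M)" if "M \<noteq> {#}" for M :: "nat multiset"
    using Min_in_mset[OF that] by (auto simp flip: count_greater_zero_iff)
  then have split: "overpartitions n = A2 \<union> (single_overlined_min n \<union> single_plain_min n)"
    using overpartition_nonempty[OF _ assms]
    by (auto simp: A2_def single_overlined_min_def single_plain_min_def)
  have fin: "finite A2" "finite (single_overlined_min n)" "finite (single_plain_min n)"
    by (auto intro: finite_subset[OF _ finite_overpartitions]
        simp: A2_def single_overlined_min_def single_plain_min_def)
  have "card (single_overlined_min n \<union> single_plain_min n)
      = card (single_overlined_min n) + card (single_plain_min n)"
    using fin by (intro card_Un_disjoint) (auto simp: single_overlined_min_def single_plain_min_def)
  moreover have "card (A2 \<union> (single_overlined_min n \<union> single_plain_min n))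
      = card A2 + card (single_overlined_min n \<union> single_plain_min n)"
    using fin by (intro card_Un_disjoint) (auto simp: A2_def single_overlined_min_def single_plain_min_def)
  ultimately have "pbar n = card A2 + card (single_overlined_min n) + card (single_plain_min n)"
    unfolding pbar_def split by simp
  then show ?thesis by (simp add: abar_def A2_def)
qed

lemma remove_plain_one_in_overpartitions:
  assumes "(M, Ov) \<in> overpartitions (Suc n)" "plain_count (M, Ov) 1 \<noteq> 0"
  shows "(M - {#1#}, Ov) \<in> overpartitions n"
proof -
  have one: "1 \<in># M" and two: "1 \<in> Ov \<Longrightarrow> 2 \<le> count M 1"
    using assms(2) by (auto simp: plain_count_eq_0_iff simp flip: count_greater_zero_iff)
  have "sum_mset (M - {#1#}) + 1 = Suc n"
    using sum_mset_replace[OF one, of 0] assms(1) by (simp add: overpartitions_def)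
  moreover have "Ov \<subseteq> set_mset (M - {#1#})"
    using assms(1) two by (auto simp: overpartitions_def in_diff_single_iff)
  ultimately show ?thesis
    using assms(1) by (auto simp: overpartitions_def dest: in_diffD)
qed

lemma bij_betw_add_plain_one:
  "bij_betw (map_prod (add_mset 1) id) (overpartitions n)
     {P \<in> overpartitions (Suc n). plain_count P 1 \<noteq> 0}"
proof (rule bij_betw_byWitness[where f' = "map_prod (\<lambda>M. M - {#1#}) id"])
  show "map_prod (add_mset 1) id ` overpartitions n
      \<subseteq> {P \<in> overpartitions (Suc n). plain_count P 1 \<noteq> 0}"
    by (fastforce simp: overpartitions_def plain_count_def)
  show "map_prod (\<lambda>M. M - {#1#}) id ` {P \<in> overpartitions (Suc n). plain_count P 1 \<noteq> 0}
      \<subseteq> overpartitions n"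
    using remove_plain_one_in_overpartitions by auto
  show "\<forall>P\<in>{P \<in> overpartitions (Suc n). plain_count P 1 \<noteq> 0}.
      map_prod (add_mset 1) id (map_prod (\<lambda>M. M - {#1#}) id P) = P"
  proof
    fix P assume "P \<in> {P \<in> overpartitions (Suc n). plain_count P 1 \<noteq> 0}"
    then have "1 \<in># fst P" by (cases P) (auto simp: plain_count_def simp flip: count_greater_zero_iff)
    then show "map_prod (add_mset 1) id (map_prod (\<lambda>M. M - {#1#}) id P) = P"
      by (cases P) simp
  qed
qed (simp add: map_prod_def split_beta)

lemma pbar_Suc: "pbar (Suc n) = pbar n + card (no_plain_one (Suc n))"
proof -
  have "card {P \<in> overpartitions (Suc n). plain_count P 1 \<noteq> 0} = pbar n"
    unfolding pbar_def using bij_betw_add_plain_one by (rule bij_betw_same_card[symmetric])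
  then show ?thesis
    using card_filter_split[OF finite_overpartitions, of "Suc n" "\<lambda>P. plain_count P 1 = 0"]
    by (simp add: pbar_def no_plain_one_def)
qed

lemma single_overlined_min_subset_no_plain_one: "single_overlined_min n \<subseteq> no_plain_one n"
proof
  fix P assume P: "P \<in> single_overlined_min n"
  obtain M Ov where [simp]: "P = (M, Ov)" by fastforce
  have OP: "(M, Ov) \<in> overpartitions n" and ne: "M \<noteq> {#}"
    and single: "count M (Min_mset M) = 1" "Min_mset M \<in> Ov"
    using P by (auto simp: single_overlined_min_def)
  have "Min_mset M = 1" if "1 \<in># M"
  proof -
    have "Min_mset M \<le> 1" using that by simp
    then show ?thesis using overpartition_part_pos[OF OP Min_in_mset[OF ne]] by simp
  qed
  then have "plain_count (M, Ov) 1 = 0"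
    using single by (auto simp: plain_count_eq_0_iff)
  then show "P \<in> no_plain_one n" using OP by (simp add: no_plain_one_def)
qed

lemma two_le_Min_if_not_single_overlined:
  assumes "(M, Ov) \<in> no_plain_one n - single_overlined_min n" "0 < n"
  shows "2 \<le> Min_mset M"
proof -
  have OP: "(M, Ov) \<in> overpartitions n" and no_one: "plain_count (M, Ov) 1 = 0"
    using assms(1) by (auto simp: no_plain_one_def)
  have ne: "M \<noteq> {#}" using OP assms(2) by (rule overpartition_nonempty)
  have not_single: "\<not> (count M (Min_mset M) = 1 \<and> Min_mset M \<in> Ov)"
    using assms(1) OP ne by (auto simp: single_overlined_min_def)
  have "0 < Min_mset M" using overpartition_part_pos[OF OP Min_in_mset[OF ne]] .
  moreover have "Min_mset M \<noteq> 1"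
  proof
    assume min1: "Min_mset M = 1"
    then have "1 \<in># M" using Min_in_mset[OF ne] by simp
    then show False using no_one not_single min1 by (simp add: plain_count_eq_0_iff)
  qed
  ultimately show ?thesis by simp
qed

fun raise_min :: "nat multiset \<times> nat set \<Rightarrow> nat multiset \<times> nat set" where
  "raise_min (M, Ov) = (add_mset (Min_mset M + 1) (M - {#Min_mset M#}), Ov)"

fun lower_min :: "nat multiset \<times> nat set \<Rightarrow> nat multiset \<times> nat set" where
  "lower_min (M, Ov) = (add_mset (Min_mset M - 1) (M - {#Min_mset M#}), Ov)"

lemma raise_min_mem:
  assumes "P \<in> single_plain_min n"
  shows "raise_min P \<in> no_plain_one (Suc n) - single_overlined_min (Suc n)"
proof -
  obtain M Ov where P: "P = (M, Ov)" by fastforce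
  define s where "s = Min_mset M"
  define M' where "M' = add_mset (s + 1) (M - {#s#})"
  have OP: "(M, Ov) \<in> overpartitions n" and ne: "M \<noteq> {#}"
    and single: "count M s = 1" and plain: "s \<notin> Ov"
    using assms by (auto simp: P single_plain_min_def s_def)
  have sM: "s \<in># M" using ne by (simp add: s_def)
  have s_pos: "0 < s" using overpartition_part_pos[OF OP sM] .
  have above: "s < y" if "y \<in># M" "y \<noteq> s" for y
    using that by (simp add: s_def le_neq_implies_less)
  have "(M', Ov) \<in> overpartitions (Suc n)"
    unfolding M'_def using OP sM plain
    by (intro replace_part_in_overpartitions) (auto simp: overpartitions_def in_diff_single_iff)
  moreover have "1 \<notin># M'"
  proof
    assume "1 \<in># M'"
    then have "1 = s + 1 \<or> (1 \<in># M \<and> 1 \<noteq> s)"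
      using single by (auto simp: M'_def in_diff_single_iff)
    then show False using above[of 1] s_pos by auto
  qed
  moreover have "Min_mset M' = s + 1"
    using Min_mset_raise single by (simp add: M'_def s_def)
  moreover have "\<not> (count M' (s + 1) = 1 \<and> s + 1 \<in> Ov)"
  proof
    assume single': "count M' (s + 1) = 1 \<and> s + 1 \<in> Ov"
    then have "s + 1 \<in># M" using OP by (auto simp: overpartitions_def)
    moreover have "count M (s + 1) = 0" using single' by (simp add: M'_def)
    ultimately show False by (simp flip: count_greater_zero_iff)
  qed
  moreover have "raise_min P = (M', Ov)" by (simp add: P M'_def s_def)
  ultimately show ?thesis
    by (auto simp: no_plain_one_def single_overlined_min_def plain_count_eq_0_iff)
qed

lemma lower_min_mem:
  assumes "Q \<in> no_plain_one (Suc n) - single_overlined_min (Suc n)"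
  shows "lower_min Q \<in> single_plain_min n"
proof -
  obtain M Ov where Q: "Q = (M, Ov)" by fastforce
  define t where "t = Min_mset M"
  define M' where "M' = add_mset (t - 1) (M - {#t#})"
  have OP: "(M, Ov) \<in> overpartitions (Suc n)" using assms by (simp add: Q no_plain_one_def)
  have ne: "M \<noteq> {#}" using overpartition_nonempty[OF OP] by simp
  have not_single: "\<not> (count M t = 1 \<and> t \<in> Ov)"
    using assms OP ne by (auto simp: Q single_overlined_min_def t_def)
  have t2: "2 \<le> t" using two_le_Min_if_not_single_overlined assms by (simp add: Q t_def)
  have tM: "t \<in># M" using ne by (simp add: t_def)
  have t_below: "t - 1 \<notin># M"
  proof
    assume "t - 1 \<in># M"
    then have "t \<le> t - 1" by (simp add: t_def)
    then show False using t2 by simp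
  qed
  have "Ov \<subseteq> set_mset M'"
  proof
    fix v assume v: "v \<in> Ov"
    then have "v \<in># M" using OP by (auto simp: overpartitions_def)
    moreover have "v = t \<Longrightarrow> 2 \<le> count M t"
      using not_single v tM by (auto simp flip: count_greater_zero_iff)
    ultimately show "v \<in># M'" by (auto simp: M'_def in_diff_single_iff)
  qed
  then have "(M', Ov) \<in> overpartitions n"
    unfolding M'_def using OP tM t2 by (intro replace_part_in_overpartitions) auto
  moreover have "Min_mset M' = t - 1" using Min_mset_lower by (simp add: M'_def t_def)
  moreover have "count M' (t - 1) = 1" using t_below t2 by (simp add: M'_def not_in_iff)
  moreover have "t - 1 \<notin> Ov" using t_below OP by (auto simp: overpartitions_def)
  moreover have "lower_min Q = (M', Ov)" by (simp add: Q M'_def t_def)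
  ultimately show ?thesis by (simp add: single_plain_min_def M'_def)
qed

lemma lower_min_raise_min:
  fixes M :: "nat multiset"
  assumes "count M (Min_mset M) = 1"
  shows "lower_min (raise_min (M, Ov)) = (M, Ov)"
proof -
  have "Min_mset M \<in># M" using assms by (simp flip: count_greater_zero_iff)
  then show ?thesis using Min_mset_raise[OF assms] by simp
qed

lemma raise_min_lower_min:
  fixes M :: "nat multiset"
  assumes "M \<noteq> {#}" "0 < Min_mset M"
  shows "raise_min (lower_min (M, Ov)) = (M, Ov)"
  using assms Min_mset_lower[of M] by simp

lemma bij_betw_raise_min:
  "bij_betw raise_min (single_plain_min n) (no_plain_one (Suc n) - single_overlined_min (Suc n))"
proof (rule bij_betw_byWitness[where f' = lower_min])
  show "\<forall>P\<in>single_plain_min n. lower_min (raise_min P) = P"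
    using lower_min_raise_min by (auto simp: single_plain_min_def)
  show "\<forall>Q\<in>no_plain_one (Suc n) - single_overlined_min (Suc n). raise_min (lower_min Q) = Q"
    using raise_min_lower_min overpartition_nonempty overpartition_part_pos[OF _ Min_in_mset]
    by (force simp: no_plain_one_def)
  show "raise_min ` single_plain_min n \<subseteq> no_plain_one (Suc n) - single_overlined_min (Suc n)"
    using raise_min_mem by blast
  show "lower_min ` (no_plain_one (Suc n) - single_overlined_min (Suc n)) \<subseteq> single_plain_min n"
    using lower_min_mem by blast
qed

lemma card_no_plain_one_Suc:
  "card (no_plain_one (Suc n)) = card (single_overlined_min (Suc n)) + card (single_plain_min n)"
proof -
  have sub: "single_overlined_min (Suc n) \<subseteq> no_plain_one (Suc n)"
    by (rule single_overlined_min_subset_no_plain_one)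
  have fin: "finite (no_plain_one (Suc n))"
    by (auto intro: finite_subset[OF _ finite_overpartitions] simp: no_plain_one_def)
  have "card (no_plain_one (Suc n) - single_overlined_min (Suc n)) = card (single_plain_min n)"
    using bij_betw_same_card[OF bij_betw_raise_min] by simp
  moreover have "card (no_plain_one (Suc n) - single_overlined_min (Suc n))
      = card (no_plain_one (Suc n)) - card (single_overlined_min (Suc n))"
    using finite_subset[OF sub fin] sub by (rule card_Diff_subset)
  moreover have "card (single_overlined_min (Suc n)) \<le> card (no_plain_one (Suc n))"
    using fin sub by (rule card_mono)
  ultimately show ?thesis by linarith
qed

fun move_part :: "'a \<Rightarrow> 'a \<Rightarrow> 'a multiset \<times> 'a set \<Rightarrow> 'a multiset \<times> 'a set" where
  "move_part x y (M, Ov) = (add_mset y (M - {#x#}), if x \<in> Ov then insert y (Ov - {x}) else Ov)"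

lemma move_part_inverse:
  assumes "x \<in># M" "y \<notin> Ov"
  shows "move_part y x (move_part x y (M, Ov)) = (M, Ov)"
  using assms by auto

lemma move_part_in_overpartitions:
  assumes "(M, Ov) \<in> overpartitions n" "x \<in># M" "0 < y" "n + y = m + x"
  shows "move_part x y (M, Ov) \<in> overpartitions m"
proof -
  have "(if x \<in> Ov then insert y (Ov - {x}) else Ov) \<subseteq> set_mset (add_mset y (M - {#x#}))"
    using assms(1) by (auto simp: overpartitions_def in_diff_single_iff)
  then show ?thesis using replace_part_in_overpartitions[OF assms] by simp
qed

fun raise_max :: "nat multiset \<times> nat set \<Rightarrow> nat multiset \<times> nat set" where
  "raise_max (M, Ov) = move_part (Max_mset M) (Max_mset M + 1) (M, Ov)"

fun lower_max :: "nat multiset \<times> nat set \<Rightarrow> nat multiset \<times> nat set" where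
  "lower_max (M, Ov) = move_part (Max_mset M) (Max_mset M - 1) (M, Ov)"

definition single_overlined_min_lone_max :: "nat \<Rightarrow> (nat multiset \<times> nat set) set" where
  "single_overlined_min_lone_max n = {(M, Ov) \<in> single_overlined_min n.
     count M (Max_mset M) = 1 \<and> Max_mset M - 1 \<notin> Ov}"

lemma not_ubar_cond_iff:
  assumes "(M, Ov) \<in> single_overlined_min N"
  shows "\<not> ubar_cond (M, Ov) \<longleftrightarrow> count M (Max_mset M) = 1 \<and> Max_mset M - 1 \<notin> Ov"
proof -
  define L where "L = Max_mset M"
  define R where "R = M - {#L#}"
  have OP: "(M, Ov) \<in> overpartitions N" and ne: "M \<noteq> {#}"
    using assms by (auto simp: single_overlined_min_def)
  have "plain_count (M, Ov) 1 = 0"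
    using assms single_overlined_min_subset_no_plain_one by (auto simp: no_plain_one_def)
  then have ubar: "ubar_cond (M, Ov) \<longleftrightarrow>
      R \<noteq> {#} \<and> (Max_mset R = L \<or> (Max_mset R + 1 = L \<and> Max_mset R \<in> Ov))"
    using assms by (auto simp: ubar_cond_def single_overlined_min_def Let_def L_def R_def)
  have LM: "L \<in># M" using ne by (simp add: L_def)
  have L_pos: "0 < L" using overpartition_part_pos[OF OP LM] .
  have R_le: "y \<le> L" if "y \<in># R" for y
    using in_diffD[OF that[unfolded R_def]] by (simp add: L_def)
  show ?thesis
  proof (cases "count M L = 1")
    case False
    then have "L \<in># R" using LM by (auto simp: R_def in_diff_single_iff simp flip: count_greater_zero_iff)
    then have "Max_mset R = L" using R_le by (intro Max_eqI) auto
    then show ?thesis using ubar False \<open>L \<in># R\<close> by (auto simp: L_def)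
  next
    case True
    then have R_less: "y < L" if "y \<in># R" for y
      using that R_le by (auto simp: R_def in_diff_single_iff intro: le_neq_implies_less)
    have "L - 1 \<in> Ov \<longleftrightarrow> R \<noteq> {#} \<and> Max_mset R + 1 = L \<and> Max_mset R \<in> Ov"
    proof
      assume "L - 1 \<in> Ov"
      then have "L - 1 \<in># R"
        using OP L_pos by (auto simp: overpartitions_def R_def in_diff_single_iff)
      moreover have "Max_mset R = L - 1"
        using calculation R_less by (intro Max_eqI) fastforce+
      ultimately show "R \<noteq> {#} \<and> Max_mset R + 1 = L \<and> Max_mset R \<in> Ov"
        using \<open>L - 1 \<in> Ov\<close> L_pos by auto
    next
      assume "R \<noteq> {#} \<and> Max_mset R + 1 = L \<and> Max_mset R \<in> Ov"
      then show "L - 1 \<in> Ov" by (metis add_diff_cancel_right')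
    qed
    moreover have "Max_mset R \<noteq> L" if "R \<noteq> {#}"
      using R_less[OF Max_in_mset[OF that]] by simp
    ultimately show ?thesis using ubar True by (auto simp: L_def)
  qed
qed

lemma raise_max_mem:
  assumes "P \<in> single_overlined_min n"
  shows "raise_max P \<in> single_overlined_min_lone_max (Suc n)"
proof -
  obtain M Ov where P: "P = (M, Ov)" by fastforce
  define s L where "s = Min_mset M" and "L = Max_mset M"
  define M' where "M' = add_mset (L + 1) (M - {#L#})"
  define Ov' where "Ov' = (if L \<in> Ov then insert (L + 1) (Ov - {L}) else Ov)"
  have raise: "raise_max P = (M', Ov')" by (simp add: P L_def M'_def Ov'_def)
  have OP: "(M, Ov) \<in> overpartitions n" and ne: "M \<noteq> {#}"
    and single: "count M s = 1" and s_ov: "s \<in> Ov"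
    using assms by (auto simp: P single_overlined_min_def s_def)
  have LM: "L \<in># M" using ne by (simp add: L_def)
  have above: "L + 1 \<notin># M"
  proof
    assume "L + 1 \<in># M"
    then have "L + 1 \<le> L" by (simp add: L_def)
    then show False by simp
  qed
  have "(M', Ov') \<in> overpartitions (Suc n)"
    using move_part_in_overpartitions[OF OP LM, of "L + 1" "Suc n"] raise by (simp add: P L_def)
  moreover have "count M' (Min_mset M') = 1 \<and> Min_mset M' \<in> Ov'"
  proof (cases "L = s")
    case True
    then have "M = {#s#}"
      using mset_eq_single_if_Min_eq_Max single by (simp add: s_def L_def)
    then show ?thesis using True s_ov by (simp add: M'_def Ov'_def)
  next
    case False
    have "L \<noteq> Min_mset M" "Min_mset M < L + 1"
      using False Min_in_mset[OF ne] by (simp_all add: s_def L_def less_Suc_eq_le)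
    then have "Min_mset M' = s" "count M' s = 1"
      using Min_mset_replace_other[OF single[unfolded s_def] LM] by (simp_all add: M'_def s_def)
    then show ?thesis using False s_ov by (simp add: Ov'_def)
  qed
  moreover have "Max_mset M' = L + 1" using Max_mset_raise by (simp add: M'_def L_def)
  moreover have "count M' (L + 1) = 1" using above by (simp add: M'_def not_in_iff)
  moreover have "L \<notin> Ov'" using above OP by (auto simp: Ov'_def overpartitions_def)
  ultimately show ?thesis
    using raise by (simp add: single_overlined_min_lone_max_def single_overlined_min_def M'_def)
qed

lemma lower_max_mem:
  assumes "Q \<in> single_overlined_min_lone_max (Suc n)" "0 < n"
  shows "lower_max Q \<in> single_overlined_min n"
proof -
  obtain M Ov where Q: "Q = (M, Ov)" by fastforce
  define s L where "s = Min_mset M" and "L = Max_mset M"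
  define M' where "M' = add_mset (L - 1) (M - {#L#})"
  define Ov' where "Ov' = (if L \<in> Ov then insert (L - 1) (Ov - {L}) else Ov)"
  have lower: "lower_max Q = (M', Ov')" by (simp add: Q L_def M'_def Ov'_def)
  have OP: "(M, Ov) \<in> overpartitions (Suc n)" and ne: "M \<noteq> {#}"
    and single: "count M s = 1" and s_ov: "s \<in> Ov" and gap: "L - 1 \<notin> Ov"
    using assms(1)
    by (auto simp: Q single_overlined_min_lone_max_def single_overlined_min_def s_def L_def)
  have LM: "L \<in># M" using ne by (simp add: L_def)
  have s_pos: "0 < s" using overpartition_part_pos[OF OP Min_in_mset[OF ne]] by (simp add: s_def)
  have "s \<le> L" using Min_in_mset[OF ne] by (simp add: s_def L_def)
  moreover have "s \<noteq> L - 1" using s_ov gap by auto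
  moreover have "M = {#s#}" if "L = s"
    using mset_eq_single_if_Min_eq_Max[of M] single that by (simp add: s_def L_def)
  ultimately consider (one_part) "L = s" "M = {#s#}" | (two_parts) "s < L - 1"
    by fastforce
  note max_cases = this
  have L2: "2 \<le> L"
  proof (cases rule: max_cases)
    case one_part
    then have "L = Suc n" using OP by (simp add: overpartitions_def)
    then show ?thesis using assms(2) by simp
  qed (use s_pos in simp)
  have "(M', Ov') \<in> overpartitions n"
    using move_part_in_overpartitions[OF OP LM, of "L - 1" n] lower L2 by (simp add: Q L_def)
  moreover have "count M' (Min_mset M') = 1 \<and> Min_mset M' \<in> Ov'"
  proof (cases rule: max_cases)
    case one_part
    then show ?thesis using s_ov by (simp add: M'_def Ov'_def)
  next
    case two_parts
    then have "L \<noteq> Min_mset M" "Min_mset M < L - 1" by (simp_all add: s_def)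
    then have "Min_mset M' = s" "count M' s = 1"
      using Min_mset_replace_other[OF single[unfolded s_def] LM] by (simp_all add: M'_def s_def)
    then show ?thesis using two_parts s_ov by (auto simp: Ov'_def)
  qed
  ultimately show ?thesis using lower by (simp add: single_overlined_min_def M'_def)
qed

lemma lower_max_raise_max:
  fixes M :: "nat multiset"
  assumes "M \<noteq> {#}" "Ov \<subseteq> set_mset M"
  shows "lower_max (raise_max (M, Ov)) = (M, Ov)"
proof -
  define L where "L = Max_mset M"
  have "L \<in># M" using assms(1) by (simp add: L_def)
  moreover have "L + 1 \<notin> Ov"
  proof
    assume "L + 1 \<in> Ov"
    then have "L + 1 \<in># M" using assms(2) by auto
    then have "L + 1 \<le> L" by (simp add: L_def)
    then show False by simp
  qed
  ultimately show ?thesis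
    using move_part_inverse[of L M "L + 1" Ov] Max_mset_raise[of M] by (simp add: L_def)
qed

lemma raise_max_lower_max:
  fixes M :: "nat multiset"
  assumes "count M (Max_mset M) = 1" "0 < Max_mset M" "Max_mset M - 1 \<notin> Ov"
  shows "raise_max (lower_max (M, Ov)) = (M, Ov)"
proof -
  define L where "L = Max_mset M"
  have "L \<in># M" using assms(1) by (simp add: L_def flip: count_greater_zero_iff)
  then show ?thesis
    using move_part_inverse[of L M "L - 1" Ov] Max_mset_lower[OF assms(1)] assms(2,3)
    by (simp add: L_def)
qed

lemma bij_betw_raise_max:
  assumes "0 < n"
  shows "bij_betw raise_max (single_overlined_min n) (single_overlined_min_lone_max (Suc n))"
proof (rule bij_betw_byWitness[where f' = lower_max])
  show "\<forall>P\<in>single_overlined_min n. lower_max (raise_max P) = P"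
    using lower_max_raise_max by (auto simp: single_overlined_min_def overpartitions_def)
  show "\<forall>Q\<in>single_overlined_min_lone_max (Suc n). raise_max (lower_max Q) = Q"
  proof
    fix Q assume Q: "Q \<in> single_overlined_min_lone_max (Suc n)"
    obtain M Ov where Q_eq: "Q = (M, Ov)" by fastforce
    have OP: "(M, Ov) \<in> overpartitions (Suc n)" and ne: "M \<noteq> {#}"
      and max: "count M (Max_mset M) = 1" "Max_mset M - 1 \<notin> Ov"
      using Q by (auto simp: Q_eq single_overlined_min_lone_max_def single_overlined_min_def)
    have "0 < Max_mset M" using overpartition_part_pos[OF OP Max_in_mset[OF ne]] .
    then show "raise_max (lower_max Q) = Q"
      unfolding Q_eq by (rule raise_max_lower_max[OF max(1) _ max(2)])
  qed
  show "raise_max ` single_overlined_min n \<subseteq> single_overlined_min_lone_max (Suc n)"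
    by (rule image_subsetI) (rule raise_max_mem)
  show "lower_max ` single_overlined_min_lone_max (Suc n) \<subseteq> single_overlined_min n"
    by (rule image_subsetI) (rule lower_max_mem[OF _ assms])
qed

lemma ubar_eq_card: "ubar N = card {P \<in> single_overlined_min N. ubar_cond P}"
  unfolding ubar_def
  by (rule arg_cong[where f = card]) (auto simp: single_overlined_min_def ubar_cond_def Let_def)

lemma card_single_overlined_min_Suc:
  assumes "0 < n"
  shows "card (single_overlined_min (Suc n)) = ubar (Suc n) + card (single_overlined_min n)"
proof -
  have "{P \<in> single_overlined_min (Suc n). \<not> ubar_cond P} = single_overlined_min_lone_max (Suc n)"
    using not_ubar_cond_iff by (auto simp: single_overlined_min_lone_max_def)
  then have "card {P \<in> single_overlined_min (Suc n). \<not> ubar_cond P} = card (single_overlined_min n)"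
    using bij_betw_same_card[OF bij_betw_raise_max[OF assms]] by simp
  moreover have "finite (single_overlined_min (Suc n))"
    by (auto intro: finite_subset[OF _ finite_overpartitions] simp: single_overlined_min_def)
  ultimately show ?thesis
    using card_filter_split[of "single_overlined_min (Suc n)" ubar_cond] ubar_eq_card by simp
qed

theorem theorem5p1:
  fixes n :: nat
  assumes "1 \<le> n"
  shows "int (abar 2 n) = 2 * int (pbar n) - int (pbar (n + 1)) + int (ubar (n + 1))"
proof -
  have n: "0 < n" using assms by simp
  have "pbar (Suc n) = pbar n + card (single_overlined_min (Suc n)) + card (single_plain_min n)"
    using pbar_Suc card_no_plain_one_Suc by simp
  moreover have "card (single_overlined_min (Suc n)) = ubar (Suc n) + card (single_overlined_min n)"
    using card_single_overlined_min_Suc[OF n] .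
  moreover have "pbar n = abar 2 n + card (single_overlined_min n) + card (single_plain_min n)"
    using pbar_split_min[OF n] .
  ultimately show ?thesis by simp
qed

end
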